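(* Let $0<a,b<1$, $f\ge3$, and let $w^*_n,q^*_n,\overline w_{m,n},\overline q_n$ be as in the context. Define $[w^*(a),q^*(a)]_n:=w^*_n(a)q^*_{n+1}(a)-q^*_n(a)w^*_{n+1}(a)$ and $[\overline w,\overline q]_n:=\overline w_{n,0}\overline q_{n+1}-\overline q_n\overline w_{n+1,0}$ for $n\ge1$. Then: 1. $[w^*(a),q^*(a)]_n=a^2z^2x_a^{\,n-1}$ for all $n\ge1$; 2. $[\overline w,\overline q]_{f-1}=\frac{1-b}{1-a}[w^*(a),q^*(a)]_{f-1}=\frac{1-b}{1-a}a^2z^2x_a^{\,f-2}$; 3. $[\overline w,\overline q]_{f+j-1}=\frac{1-b}{1-a}a^2z^2x_a^{\,f-2}x(a,b)x_b^{\,j-1}$ for all $j\ge1$.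
   Context: Let $r,y,z$ be indeterminates. For $c\in(0,1)$: $\omega_c:=1-(1-c)^2r^2y^2z^2$, $\tau_c:=1+(1-c)^2r^2z^2y(1-y)$, $x_c:=c^2z^2\tau_c^2$, $\beta_c:=1+z^2(c^2-(1-c)^2r^2(y^2+c^2(1-y)^2z^2))$; $w^*_0(c):=(\beta_c-\omega_c)/x_c$, $w^*_1(c):=1$, $w^*_{n+1}(c):=\beta_cw^*_n(c)-x_cw^*_{n-1}(c)$ ($n\ge1$); $q^*_0(c):=-(1-y)(1+y+(1-c)^2r^2y^2z^2(1-y))/\tau_c^2$, $q^*_1(c):=y^2$, $q^*_{n+1}(c):=\beta_cq^*_n(c)-x_cq^*_{n-1}(c)$ ($n\ge1$). Also $\tau(a,b):=1+(1-a)(1-b)r^2z^2y(1-y)$, $x(a,b):=b^2z^2\tau(a,b)^2$, $x(b,a):=a^2z^2\tau(a,b)^2$, $\beta(a,b):=\beta_b-(b-a)b^2(1-b)r^2(1-y)^2z^4$, $\beta(b,a):=\beta_a-(a-b)a^2(1-a)r^2(1-y)^2z^4$. Downward array $\overline w_{n,m}$ ($0\le m<n$): $\overline w_{m+1,m}:=1$; for $n-m\ge2$: $\overline w_{m+\ell,m}:=w^*_\ell(a)$ if $m+\ell\le f-1$, $:=w^*_\ell(b)$ if $f-1\le m$; $\overline w_{f+j,f-2}:=\frac{1-a}{1-b}w^*_{j+2}(b)+\frac{a-b}{1-b}w^*_{j+1}(b)$ ($j\ge0$); $\overline w_{n,f-3}:=\beta(b,a)\overline w_{n,f-2}-x(b,a)\overline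 w_{n,f-1}$ ($n\ge f$); $\overline w_{n,f-\ell-2}:=\beta_a\overline w_{n,f-\ell-1}-x_a\overline w_{n,f-\ell}$ ($n\ge f$, $\ell\ge2$). The sequence $\overline q_n$, $n\ge1$: $\overline q_n:=q^*_n(a)$ for $1\le n<f$; $\overline q_f:=\frac{1-b}{1-a}q^*_f(a)+\frac{b-a}{1-a}q^*_{f-1}(a)$; $\overline q_{f+1}:=\beta(a,b)\overline q_f-x(a,b)\overline q_{f-1}$; $\overline q_{f+j+1}:=\beta_b\overline q_{f+j}-x_b\overline q_{f+j-1}$ for $j\ge1$. *)

theory Defs
  imports Main "HOL.Real"
begin

text \<open>The indeterminates r, y, z are modelled as real parameters.\<close>

definition omega_c :: "real \<Rightarrow> real \<Rightarrow> real \<Rightarrow> real \<Rightarrow> real" where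
  "omega_c r y z c = 1 - (1-c)^2 * r^2 * y^2 * z^2"

definition tau_c :: "real \<Rightarrow> real \<Rightarrow> real \<Rightarrow> real \<Rightarrow> real" where
  "tau_c r y z c = 1 + (1-c)^2 * r^2 * z^2 * y * (1-y)"

definition x_c :: "real \<Rightarrow> real \<Rightarrow> real \<Rightarrow> real \<Rightarrow> real" where
  "x_c r y z c = c^2 * z^2 * (tau_c r y z c)^2"

definition beta_c :: "real \<Rightarrow> real \<Rightarrow> real \<Rightarrow> real \<Rightarrow> real" where
  "beta_c r y z c = 1 + z^2 * (c^2 - (1-c)^2 * r^2 * (y^2 + c^2 * (1-y)^2 * z^2))"

fun wstar :: "real \<Rightarrow> real \<Rightarrow> real \<Rightarrow> real \<Rightarrow> nat \<Rightarrow> real" where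
  "wstar r y z c 0 = (beta_c r y z c - omega_c r y z c) / x_c r y z c"
| "wstar r y z c (Suc 0) = 1"
| "wstar r y z c (Suc (Suc n)) =
     beta_c r y z c * wstar r y z c (Suc n) - x_c r y z c * wstar r y z c n"

fun qstar :: "real \<Rightarrow> real \<Rightarrow> real \<Rightarrow> real \<Rightarrow> nat \<Rightarrow> real" where
  "qstar r y z c 0 = - (1-y) * (1 + y + (1-c)^2 * r^2 * y^2 * z^2 * (1-y)) / (tau_c r y z c)^2"
| "qstar r y z c (Suc 0) = y^2"
| "qstar r y z c (Suc (Suc n)) =
     beta_c r y z c * qstar r y z c (Suc n) - x_c r y z c * qstar r y z c n"

definition tau_ab :: "real \<Rightarrow> real \<Rightarrow> real \<Rightarrow> real \<Rightarrow> real \<Rightarrow> real" where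
  "tau_ab r y z a b = 1 + (1-a) * (1-b) * r^2 * z^2 * y * (1-y)"

text \<open>xab r y z a b = x(a,b) = b^2 z^2 tau(a,b)^2 ; x(b,a) = a^2 z^2 tau(a,b)^2 = xab r y z b a
  (tau is symmetric).\<close>
definition xab :: "real \<Rightarrow> real \<Rightarrow> real \<Rightarrow> real \<Rightarrow> real \<Rightarrow> real" where
  "xab r y z a b = b^2 * z^2 * (tau_ab r y z a b)^2"

definition betaab :: "real \<Rightarrow> real \<Rightarrow> real \<Rightarrow> real \<Rightarrow> real \<Rightarrow> real" where
  "betaab r y z a b = beta_c r y z b - (b-a) * b^2 * (1-b) * r^2 * (1-y)^2 * z^4"

text \<open>Lower part of the downward array: wlow r y z a b f n k = wbar_{n, f-2-k} for n >= f.\<close>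
fun wlow :: "real \<Rightarrow> real \<Rightarrow> real \<Rightarrow> real \<Rightarrow> real \<Rightarrow> nat \<Rightarrow> nat \<Rightarrow> nat \<Rightarrow> real" where
  "wlow r y z a b f n 0 =
     (1-a)/(1-b) * wstar r y z b (n - f + 2) + (a-b)/(1-b) * wstar r y z b (n - f + 1)"
| "wlow r y z a b f n (Suc 0) =
     betaab r y z b a * wlow r y z a b f n 0 - xab r y z b a * wstar r y z b (n - f + 1)"
| "wlow r y z a b f n (Suc (Suc k)) =
     beta_c r y z a * wlow r y z a b f n (Suc k) - x_c r y z a * wlow r y z a b f n k"

text \<open>Downward array wbar_{n,m} (meaningful for 0 <= m < n).\<close>
definition wbar :: "real \<Rightarrow> real \<Rightarrow> real \<Rightarrow> real \<Rightarrow> real \<Rightarrow> nat \<Rightarrow> nat \<Rightarrow> nat \<Rightarrow> real" where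
  "wbar r y z a b f n m =
     (if n = m + 1 then 1
      else if n \<le> f - 1 then wstar r y z a (n - m)
      else if f - 1 \<le> m then wstar r y z b (n - m)
      else wlow r y z a b f n (f - 2 - m))"

text \<open>qhigh r y z a b f j = qbar_{f-1+j}.\<close>
fun qhigh :: "real \<Rightarrow> real \<Rightarrow> real \<Rightarrow> real \<Rightarrow> real \<Rightarrow> nat \<Rightarrow> nat \<Rightarrow> real" where
  "qhigh r y z a b f 0 = qstar r y z a (f - 1)"
| "qhigh r y z a b f (Suc 0) =
     (1-b)/(1-a) * qstar r y z a f + (b-a)/(1-a) * qstar r y z a (f - 1)"
| "qhigh r y z a b f (Suc (Suc 0)) =
     betaab r y z a b * qhigh r y z a b f (Suc 0) - xab r y z a b * qhigh r y z a b f 0"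
| "qhigh r y z a b f (Suc (Suc (Suc j))) =
     beta_c r y z b * qhigh r y z a b f (Suc (Suc j)) - x_c r y z b * qhigh r y z a b f (Suc j)"

definition qbar :: "real \<Rightarrow> real \<Rightarrow> real \<Rightarrow> real \<Rightarrow> real \<Rightarrow> nat \<Rightarrow> nat \<Rightarrow> real" where
  "qbar r y z a b f n = (if n < f then qstar r y z a n else qhigh r y z a b f (n - f + 1))"

definition brstar :: "real \<Rightarrow> real \<Rightarrow> real \<Rightarrow> real \<Rightarrow> nat \<Rightarrow> real" where
  "brstar r y z a n = wstar r y z a n * qstar r y z a (n+1) - qstar r y z a n * wstar r y z a (n+1)"

definition brbar :: "real \<Rightarrow> real \<Rightarrow> real \<Rightarrow> real \<Rightarrow> real \<Rightarrow> nat \<Rightarrow> nat \<Rightarrow> real" where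
  "brbar r y z a b f n = wbar r y z a b f n 0 * qbar r y z a b f (n+1)
                         - qbar r y z a b f n * wbar r y z a b f (n+1) 0"

end

theory Submission
  imports Defs
begin

text \<open>Every bracket in the statement is a Casoratian u_n v_{n+1} - v_n u_{n+1} of two solutions
  of a three-term recurrence u_{n+2} = B u_{n+1} - X u_n, and such a Casoratian is multiplied by X
  at each step. The sequences w^* and q^* solve the recurrence for c = a, which gives the first
  claim once the initial bracket is computed. The column wbar_{n,0} and the sequence qbar_n follow
  w^*(a), q^*(a) up to n = f-1, are then replaced at n = f by the same linear combination with
  weights (1-b)/(1-a) and (b-a)/(1-a), take one step with (beta(a,b), x(a,b)), and afterwards
  solve the recurrence for c = b. The only real work is to show this for the column of the
  downward array, which is defined row by row: on each row both sides solve the recurrence for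
  c = a, so it suffices to compare the first two entries, which are polynomial identities.\<close>

definition casoratian :: "(nat \<Rightarrow> 'a::comm_ring_1) \<Rightarrow> (nat \<Rightarrow> 'a) \<Rightarrow> nat \<Rightarrow> 'a" where
  "casoratian u v n = u n * v (Suc n) - v n * u (Suc n)"

definition solves_recurrence :: "'a::comm_ring_1 \<Rightarrow> 'a \<Rightarrow> (nat \<Rightarrow> 'a) \<Rightarrow> bool" where
  "solves_recurrence B X u \<longleftrightarrow> (\<forall>n. u (Suc (Suc n)) = B * u (Suc n) - X * u n)"

lemma solves_recurrence_unique:
  assumes "solves_recurrence B X u" "solves_recurrence B X v" "u 0 = v 0" "u 1 = v 1"
  shows "u = v"
proof
  fix n
  have "u n = v n \<and> u (Suc n) = v (Suc n)"
    by (induction n) (use assms in \<open>auto simp: solves_recurrence_def\<close>)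
  then show "u n = v n" ..
qed

lemma solves_recurrence_lincomb:
  assumes "solves_recurrence B X u" "solves_recurrence B X v"
  shows "solves_recurrence B X (\<lambda>n. p * u n + q * v n)"
  unfolding solves_recurrence_def
  by (simp add: assms[unfolded solves_recurrence_def] algebra_simps)

lemma solves_recurrence_shift:
  assumes "solves_recurrence B X u"
  shows "solves_recurrence B X (\<lambda>n. u (n + k))"
  using assms by (simp add: solves_recurrence_def)

lemma casoratian_Suc:
  assumes "u (Suc (Suc n)) = B * u (Suc n) - X * u n"
    and "v (Suc (Suc n)) = B * v (Suc n) - X * v n"
  shows "casoratian u v (Suc n) = X * casoratian u v n"
  by (simp add: casoratian_def assms algebra_simps)

lemma casoratian_eq_power:
  assumes "solves_recurrence B X u" "solves_recurrence B X v"
  shows "casoratian u v n = X ^ n * casoratian u v 0"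
proof (induction n)
  case (Suc n)
  then show ?case
    using assms casoratian_Suc[of u n B X v] by (simp add: solves_recurrence_def mult.assoc)
qed simp

lemma casoratian_shift:
  "casoratian (\<lambda>n. u (n + k)) (\<lambda>n. v (n + k)) n = casoratian u v (n + k)"
  by (simp add: casoratian_def)

lemma casoratian_replace_Suc:
  assumes "u' n = u n" "v' n = v n"
    and "u' (Suc n) = p * u (Suc n) + q * u n" "v' (Suc n) = p * v (Suc n) + q * v n"
  shows "casoratian u' v' n = p * casoratian u v n"
  by (simp add: casoratian_def assms algebra_simps)

lemma x_c_nonzero: "c \<noteq> 0 \<Longrightarrow> z \<noteq> 0 \<Longrightarrow> tau_c r y z c \<noteq> 0 \<Longrightarrow> x_c r y z c \<noteq> 0"
  by (simp add: x_c_def)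

lemma wstar_solves: "solves_recurrence (beta_c r y z c) (x_c r y z c) (wstar r y z c)"
  by (simp add: solves_recurrence_def)

lemma qstar_solves: "solves_recurrence (beta_c r y z c) (x_c r y z c) (qstar r y z c)"
  by (simp add: solves_recurrence_def)

lemma wlow_solves: "solves_recurrence (beta_c r y z a) (x_c r y z a) (wlow r y z a b f n)"
  by (simp add: solves_recurrence_def)

lemma brstar_eq_casoratian: "brstar r y z a = casoratian (wstar r y z a) (qstar r y z a)"
  by (simp add: fun_eq_iff brstar_def casoratian_def)

lemma brbar_eq_casoratian:
  "brbar r y z a b f = casoratian (\<lambda>n. wbar r y z a b f n 0) (qbar r y z a b f)"
  by (simp add: fun_eq_iff brbar_def casoratian_def)

lemma brstar_zero:
  assumes "x_c r y z a \<noteq> 0" "tau_c r y z a \<noteq> 0"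
  shows "x_c r y z a * brstar r y z a 0 = a^2 * z^2"
proof -
  have "x_c r y z a * brstar r y z a 0
      = (beta_c r y z a - omega_c r y z a) * y^2 - x_c r y z a * qstar r y z a 0"
    using assms(1) by (simp add: brstar_def field_simps)
  also have "\<dots> = a^2 * z^2"
    unfolding omega_c_def x_c_def beta_c_def qstar.simps using assms(2)
    by (simp add: divide_simps) algebra
  finally show ?thesis .
qed

lemma brstar_eq_power:
  assumes "x_c r y z a \<noteq> 0" "tau_c r y z a \<noteq> 0" "n \<ge> 1"
  shows "brstar r y z a n = a^2 * z^2 * (x_c r y z a)^(n-1)"
proof -
  obtain m where n: "n = Suc m" using assms(3) by (cases n) auto
  have "brstar r y z a n = (x_c r y z a)^m * (x_c r y z a * brstar r y z a 0)"
    using casoratian_eq_power[OF wstar_solves qstar_solves, of r y z a n]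
    by (simp add: n brstar_eq_casoratian mult.assoc)
  then show ?thesis
    unfolding brstar_zero[OF assms(1,2)] n by (simp add: mult.commute)
qed

lemma wlow_row_recurrence:
  "wlow r y z a b f (Suc (Suc (m + f))) k
     = beta_c r y z b * wlow r y z a b f (Suc (m + f)) k - x_c r y z b * wlow r y z a b f (m + f) k"
proof -
  have "wlow r y z a b f (Suc (Suc (m + f))) = (\<lambda>k. beta_c r y z b * wlow r y z a b f (Suc (m + f)) k
      + (- x_c r y z b) * wlow r y z a b f (m + f) k)"
    by (rule solves_recurrence_unique[OF wlow_solves solves_recurrence_lincomb[OF wlow_solves wlow_solves]])
       (simp_all add: divide_inverse algebra_simps)
  then show ?thesis by simp
qed

lemma wbar_zero_at_f_minus_1: "f \<ge> 3 \<Longrightarrow> wbar r y z a b f (f - 1) 0 = wstar r y z a (f - 1)"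
  by (simp add: wbar_def)

lemma wbar_zero_eq_wlow: "f \<ge> 2 \<Longrightarrow> f \<le> n \<Longrightarrow> wbar r y z a b f n 0 = wlow r y z a b f n (f - 2)"
  by (auto simp: wbar_def simp del: wlow.simps)

lemma brbar_tail:
  assumes "f \<ge> 2"
  shows "brbar r y z a b f (m + f) = (x_c r y z b)^m * brbar r y z a b f f"
proof -
  let ?w = "\<lambda>n. wbar r y z a b f n 0" and ?q = "qbar r y z a b f"
  have "solves_recurrence (beta_c r y z b) (x_c r y z b) (\<lambda>n. ?w (n + f))"
    unfolding solves_recurrence_def
    using assms by (simp add: wbar_zero_eq_wlow wlow_row_recurrence)
  moreover have "solves_recurrence (beta_c r y z b) (x_c r y z b) (\<lambda>n. ?q (n + f))"
    by (simp add: solves_recurrence_def qbar_def)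
  ultimately have "casoratian (\<lambda>n. ?w (n + f)) (\<lambda>n. ?q (n + f)) m
      = (x_c r y z b)^m * casoratian (\<lambda>n. ?w (n + f)) (\<lambda>n. ?q (n + f)) 0"
    by (rule casoratian_eq_power)
  then show ?thesis
    unfolding brbar_eq_casoratian casoratian_shift[of ?w f ?q] by simp
qed

context
  fixes r y z a b :: real and f :: nat
  assumes a_ne_1: "a \<noteq> 1" and b_ne_1: "b \<noteq> 1"
    and x_a: "x_c r y z a \<noteq> 0" and x_b: "x_c r y z b \<noteq> 0"
begin

lemma wlow_at_f_zero:
  "wlow r y z a b f f 0 = (1-b)/(1-a) * omega_c r y z a + (b-a)/(1-a)"
proof -
  have "wlow r y z a b f f 0 = (1-a)/(1-b) * omega_c r y z b + (a-b)/(1-b)"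
    using x_b by simp
  also have "\<dots> = (1-b)/(1-a) * omega_c r y z a + (b-a)/(1-a)"
    unfolding omega_c_def using a_ne_1 b_ne_1 by (simp add: divide_simps) algebra
  finally show ?thesis .
qed

lemma wlow_at_f_one:
  "wlow r y z a b f f (Suc 0)
     = (1-b)/(1-a) * (beta_c r y z a * omega_c r y z a - x_c r y z a) + (b-a)/(1-a) * omega_c r y z a"
proof -
  have "wlow r y z a b f f (Suc 0)
      = betaab r y z b a * ((1-a)/(1-b) * omega_c r y z b + (a-b)/(1-b)) - xab r y z b a"
    using x_b by simp
  also have "\<dots> = (1-b)/(1-a) * (beta_c r y z a * omega_c r y z a - x_c r y z a)
      + (b-a)/(1-a) * omega_c r y z a"
    unfolding omega_c_def betaab_def xab_def x_c_def beta_c_def tau_ab_def tau_c_def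
    using a_ne_1 b_ne_1 by (simp add: divide_simps) algebra
  finally show ?thesis .
qed

lemma wlow_at_f:
  "wlow r y z a b f f k
     = (1-b)/(1-a) * wstar r y z a (k + 2) + (b-a)/(1-a) * wstar r y z a (k + 1)"
proof -
  have "wlow r y z a b f f
     = (\<lambda>k. (1-b)/(1-a) * wstar r y z a (k + 2) + (b-a)/(1-a) * wstar r y z a (k + 1))"
  proof (rule solves_recurrence_unique[OF wlow_solves solves_recurrence_lincomb])
    show "wlow r y z a b f f 0
        = (1-b)/(1-a) * wstar r y z a (0 + 2) + (b-a)/(1-a) * wstar r y z a (0 + 1)"
      using x_a by (simp del: wlow.simps add: wlow_at_f_zero)
    show "wlow r y z a b f f 1
        = (1-b)/(1-a) * wstar r y z a (1 + 2) + (b-a)/(1-a) * wstar r y z a (1 + 1)"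
      using x_a by (simp del: wlow.simps add: wlow_at_f_one)
  qed (rule solves_recurrence_shift[OF wstar_solves])+
  then show ?thesis by simp
qed

lemma wlow_at_Suc_f_zero:
  "wlow r y z a b f (Suc f) 0 = betaab r y z a b * wlow r y z a b f f 0 - xab r y z a b"
proof -
  have "wlow r y z a b f (Suc f) 0
      = (1-a)/(1-b) * (beta_c r y z b * omega_c r y z b - x_c r y z b) + (a-b)/(1-b) * omega_c r y z b"
    using x_b by (simp add: numeral_3_eq_3)
  also have "\<dots> = betaab r y z a b * ((1-a)/(1-b) * omega_c r y z b + (a-b)/(1-b)) - xab r y z a b"
    unfolding omega_c_def betaab_def xab_def x_c_def beta_c_def tau_ab_def tau_c_def
    using a_ne_1 b_ne_1 by (simp add: divide_simps) algebra
  also have "\<dots> = betaab r y z a b * wlow r y z a b f f 0 - xab r y z a b"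
    using x_b by simp
  finally show ?thesis .
qed

lemma wlow_at_Suc_f_one:
  "wlow r y z a b f (Suc f) (Suc 0)
     = betaab r y z a b * wlow r y z a b f f (Suc 0) - xab r y z a b * omega_c r y z a"
proof -
  have "wlow r y z a b f (Suc f) (Suc 0)
      = betaab r y z b a * ((1-a)/(1-b) * (beta_c r y z b * omega_c r y z b - x_c r y z b)
          + (a-b)/(1-b) * omega_c r y z b) - xab r y z b a * omega_c r y z b"
    using x_b by (simp add: numeral_3_eq_3)
  also have "\<dots> = betaab r y z a b * ((1-b)/(1-a) * (beta_c r y z a * omega_c r y z a - x_c r y z a)
          + (b-a)/(1-a) * omega_c r y z a) - xab r y z a b * omega_c r y z a"
    unfolding omega_c_def betaab_def xab_def x_c_def beta_c_def tau_ab_def tau_c_def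
    using a_ne_1 b_ne_1 by (simp add: divide_simps) algebra
  also have "\<dots> = betaab r y z a b * wlow r y z a b f f (Suc 0) - xab r y z a b * omega_c r y z a"
    by (simp only: wlow_at_f_one)
  finally show ?thesis .
qed

lemma wlow_at_Suc_f:
  "wlow r y z a b f (Suc f) k
     = betaab r y z a b * wlow r y z a b f f k - xab r y z a b * wstar r y z a (k + 1)"
proof -
  have "wlow r y z a b f (Suc f)
     = (\<lambda>k. betaab r y z a b * wlow r y z a b f f k + (- xab r y z a b) * wstar r y z a (k + 1))"
  proof (rule solves_recurrence_unique[OF wlow_solves solves_recurrence_lincomb[OF wlow_solves]])
    show "solves_recurrence (beta_c r y z a) (x_c r y z a) (\<lambda>k. wstar r y z a (k + 1))"
      by (rule solves_recurrence_shift[OF wstar_solves])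
    show "wlow r y z a b f (Suc f) 0
        = betaab r y z a b * wlow r y z a b f f 0 + - xab r y z a b * wstar r y z a (0 + 1)"
      using wlow_at_Suc_f_zero by (simp del: wlow.simps)
    show "wlow r y z a b f (Suc f) 1
        = betaab r y z a b * wlow r y z a b f f 1 + - xab r y z a b * wstar r y z a (1 + 1)"
      using x_a wlow_at_Suc_f_one by (simp del: wlow.simps)
  qed
  then show ?thesis by simp
qed

lemma brbar_at_f_minus_1:
  assumes "f \<ge> 3"
  shows "brbar r y z a b f (f - 1) = (1-b)/(1-a) * brstar r y z a (f - 1)"
proof -
  have f: "Suc (f - 1) = f" "f - 2 + 2 = f" "f - 2 + 1 = f - 1" using assms by auto
  show ?thesis
    unfolding brbar_eq_casoratian brstar_eq_casoratian
  proof (rule casoratian_replace_Suc)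
    show "wbar r y z a b f (f - 1) 0 = wstar r y z a (f - 1)"
      using assms by (rule wbar_zero_at_f_minus_1)
    show "qbar r y z a b f (f - 1) = qstar r y z a (f - 1)"
      using assms by (simp add: qbar_def)
    have "wbar r y z a b f f 0 = wlow r y z a b f f (f - 2)"
      using assms by (simp add: wbar_zero_eq_wlow)
    then show "wbar r y z a b f (Suc (f - 1)) 0
        = (1-b)/(1-a) * wstar r y z a (Suc (f - 1)) + (b-a)/(1-a) * wstar r y z a (f - 1)"
      using wlow_at_f[of "f - 2"] unfolding f by simp
    show "qbar r y z a b f (Suc (f - 1))
        = (1-b)/(1-a) * qstar r y z a (Suc (f - 1)) + (b-a)/(1-a) * qstar r y z a (f - 1)"
      unfolding f(1) by (simp add: qbar_def)
  qed
qed

lemma brbar_at_f: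
  assumes "f \<ge> 3"
  shows "brbar r y z a b f f = xab r y z a b * brbar r y z a b f (f - 1)"
proof -
  have f: "Suc (f - 1) = f" "f - 2 + 1 = f - 1" using assms by auto
  have "wbar r y z a b f (Suc f) 0
      = betaab r y z a b * wbar r y z a b f f 0 - xab r y z a b * wbar r y z a b f (f - 1) 0"
    using assms wbar_zero_eq_wlow[of f "Suc f"] wbar_zero_eq_wlow[of f f] wbar_zero_at_f_minus_1
      wlow_at_Suc_f[of "f - 2", unfolded f(2)]
    by simp
  moreover have "qbar r y z a b f (Suc f)
      = betaab r y z a b * qbar r y z a b f f - xab r y z a b * qbar r y z a b f (f - 1)"
    using assms by (simp add: qbar_def numeral_2_eq_2)
  ultimately show ?thesis
    using casoratian_Suc[of "\<lambda>n. wbar r y z a b f n 0" "f - 1"] unfolding brbar_eq_casoratian f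
    by blast
qed

end

theorem lemma4:
  fixes r y z a b :: real and f :: nat
  assumes "0 < a" "a < 1" "0 < b" "b < 1" "f \<ge> 3"
    and "z \<noteq> 0" "tau_c r y z a \<noteq> 0" "tau_c r y z b \<noteq> 0"
  shows "(\<forall>n\<ge>1. brstar r y z a n = a^2 * z^2 * (x_c r y z a)^(n-1))
    \<and> brbar r y z a b f (f-1) = (1-b)/(1-a) * brstar r y z a (f-1)
    \<and> brbar r y z a b f (f-1) = (1-b)/(1-a) * a^2 * z^2 * (x_c r y z a)^(f-2)
    \<and> (\<forall>j\<ge>1. brbar r y z a b f (f+j-1)
          = (1-b)/(1-a) * a^2 * z^2 * (x_c r y z a)^(f-2) * xab r y z a b * (x_c r y z b)^(j-1))"
proof -
  have x_a: "x_c r y z a \<noteq> 0" and x_b: "x_c r y z b \<noteq> 0"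
    using assms by (simp_all add: x_c_nonzero)
  have ab: "a \<noteq> 1" "b \<noteq> 1" using assms by auto
  note brstar = brstar_eq_power[OF x_a assms(7)]
  have at_f_minus_1: "brbar r y z a b f (f-1) = (1-b)/(1-a) * brstar r y z a (f-1)"
    using brbar_at_f_minus_1[OF ab x_a x_b assms(5)] .
  have "brbar r y z a b f (f+j-1) = (x_c r y z b)^(j-1) * xab r y z a b * brbar r y z a b f (f-1)"
    if "j \<ge> 1" for j
  proof -
    have "f + j - 1 = (j - 1) + f" using that by simp
    then show ?thesis
      using brbar_tail[of f r y z a b "j - 1"] brbar_at_f[OF ab x_a x_b assms(5)] assms(5)
      by simp
  qed
  moreover have "brstar r y z a (f-1) = a^2 * z^2 * (x_c r y z a)^(f-2)"
    using brstar[of "f - 1"] assms(5) by (simp add: numeral_2_eq_2)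
  ultimately show ?thesis
    using brstar at_f_minus_1 by (simp add: algebra_simps)
qed

end
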